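(* Let $g>0$ and consider the one-dimensional shallow water system $$\partial_t h+\partial_x q=0,\qquad \partial_t q+\partial_x\Big(\frac{q^2}{h}+\tfrac12 g h^2\Big)=0,$$ with state $u=(h,q)$, $h>0$, $q=hv$. Let $u_l=(h_l,q_l)$ and $u_r=(h_r,q_r)$ be subcritical states, i.e. $|\mathcal{F}_l|<1$ and $|\mathcal{F}_r|<1$, where $\mathcal{F}=v/\sqrt{gh}$. Then there exists a unique pair of states $u_1^b=(h_1^b,q_1^b)$, $u_2^b=(h_2^b,q_2^b)$ with $h_1^b,h_2^b>0$ such that $$u_1^b\in\mathcal{N}(u_l),\qquad u_2^b\in\mathcal{P}(u_r),\qquad q_1^b=q_2^b,\qquad h_1^b=h_2^b.$$
   Context: This models a junction between one incoming canal (canal 1, initial constant state $u_l$) and one outgoing canal (canal 2, initial constant state $u_r$), with conservation of mass $q_1^b=q_2^b$ and equal water heights $h_1^b=h_2^b$ at the junction. The Froude number of a state $(h,q)$ is $\mathcal{F}=v/\sqrt{gh}=q/(h\sqrt{gh})$; a state is subcritical (fluvial) if $|\mathcal{F}|<1$ and supercritical (torrential) if $|\mathcal{F}|>1$. Riemann problems for the system are solved in the standard (Lax) sense, by a 1-wave and a 2-wave, each an admissible shock or a centered rarefaction (eigenvalues $\lambda_{1,2}=v\mp\sqrt{gh}$). For a state $u_l$, $\mathcal{N}(u_l)$ is the set of states $\hat u$ such that the solution of the Riemann problem with left state $u_l$ (for $x<0$) and right state $\hat u$ (for $x>0$) contains only waves with non-positive speed. For a state $u_r$, $\mathcal{P}(u_r)$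 is the set of states $\tilde u$ such that the solution of the Riemann problem with left state $\tilde u$ and right state $u_r$ contains only waves with non-negative speed. *)

theory Defs
  imports Complex_Main
begin

text \<open>States of the shallow water system are pairs u = (h, q) of water height h and
  discharge q = h v.  The gravity constant g is a parameter.\<close>

type_synonym state = "real \<times> real"

definition vel :: "state \<Rightarrow> real" where
  "vel u = snd u / fst u"

definition celerity :: "real \<Rightarrow> state \<Rightarrow> real" where
  "celerity g u = sqrt (g * fst u)"

definition lam1 :: "real \<Rightarrow> state \<Rightarrow> real" where
  "lam1 g u = vel u - celerity g u"

definition lam2 :: "real \<Rightarrow> state \<Rightarrow> real" where
  "lam2 g u = vel u + celerity g u"

definition froude :: "real \<Rightarrow> state \<Rightarrow> real" where
  "froude g u = snd u / (fst u * sqrt (g * fst u))"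

definition subcritical :: "real \<Rightarrow> state \<Rightarrow> bool" where
  "subcritical g u \<longleftrightarrow> fst u > 0 \<and> \<bar>froude g u\<bar> < 1"

text \<open>Second component of the flux  f(h,q) = (q, q^2/h + g h^2/2).\<close>
definition flux_q :: "real \<Rightarrow> state \<Rightarrow> real" where
  "flux_q g u = (snd u)\<^sup>2 / fst u + g * (fst u)\<^sup>2 / 2"

definition RH :: "real \<Rightarrow> state \<Rightarrow> state \<Rightarrow> real \<Rightarrow> bool" where
  "RH g ul ur s \<longleftrightarrow> s * (fst ur - fst ul) = snd ur - snd ul
                  \<and> s * (snd ur - snd ul) = flux_q g ur - flux_q g ul"

definition shock1 :: "real \<Rightarrow> state \<Rightarrow> state \<Rightarrow> real \<Rightarrow> bool" where
  "shock1 g ul ur s \<longleftrightarrow> RH g ul ur s \<and> lam1 g ur < s \<and> s < lam1 g ul \<and> s < lam2 g ur"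

definition shock2 :: "real \<Rightarrow> state \<Rightarrow> state \<Rightarrow> real \<Rightarrow> bool" where
  "shock2 g ul ur s \<longleftrightarrow> RH g ul ur s \<and> lam2 g ur < s \<and> s < lam2 g ul \<and> lam1 g ul < s"

text \<open>Centered rarefactions: ul and ur lie on the same integral curve of the
  corresponding eigenvector field (constancy of the corresponding Riemann invariant)
  and the eigenvalue increases from left to right.\<close>
definition rare1 :: "real \<Rightarrow> state \<Rightarrow> state \<Rightarrow> bool" where
  "rare1 g ul ur \<longleftrightarrow> vel ul + 2 * celerity g ul = vel ur + 2 * celerity g ur
                    \<and> lam1 g ul < lam1 g ur"

definition rare2 :: "real \<Rightarrow> state \<Rightarrow> state \<Rightarrow> bool" where
  "rare2 g ul ur \<longleftrightarrow> vel ul - 2 * celerity g ul = vel ur - 2 * celerity g ur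
                    \<and> lam2 g ul < lam2 g ur"

text \<open>A k-wave joining ul to ur, together with the set S of speeds it occupies
  (empty when the wave is trivial).\<close>
definition wave1 :: "real \<Rightarrow> state \<Rightarrow> state \<Rightarrow> real set \<Rightarrow> bool" where
  "wave1 g ul ur S \<longleftrightarrow> (ur = ul \<and> S = {})
     \<or> (\<exists>s. shock1 g ul ur s \<and> S = {s})
     \<or> (rare1 g ul ur \<and> S = {lam1 g ul .. lam1 g ur})"

definition wave2 :: "real \<Rightarrow> state \<Rightarrow> state \<Rightarrow> real set \<Rightarrow> bool" where
  "wave2 g ul ur S \<longleftrightarrow> (ur = ul \<and> S = {})
     \<or> (\<exists>s. shock2 g ul ur s \<and> S = {s})
     \<or> (rare2 g ul ur \<and> S = {lam2 g ul .. lam2 g ur})"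

definition riemann_sol :: "real \<Rightarrow> state \<Rightarrow> state \<Rightarrow> state \<Rightarrow> real set \<Rightarrow> real set \<Rightarrow> bool" where
  "riemann_sol g ul ur um S1 S2 \<longleftrightarrow> fst ul > 0 \<and> fst ur > 0 \<and> fst um > 0
      \<and> wave1 g ul um S1 \<and> wave2 g um ur S2"

definition Nset :: "real \<Rightarrow> state \<Rightarrow> state set" where
  "Nset g ul = {u. \<exists>um S1 S2. riemann_sol g ul u um S1 S2 \<and> (\<forall>s \<in> S1 \<union> S2. s \<le> 0)}"

definition Pset :: "real \<Rightarrow> state \<Rightarrow> state set" where
  "Pset g ur = {u. \<exists>um S1 S2. riemann_sol g u ur um S1 S2 \<and> (\<forall>s \<in> S1 \<union> S2. s \<ge> 0)}"

end

theory Submission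
  imports Defs
begin

text \<open>The states joined to u_l by a single 1-wave form a curve v = wave1_curve(h) that is
  strictly decreasing in h; by reflection, the states joined to u_r by a 2-wave form a
  strictly increasing curve. The two curves meet in exactly one point X, the middle state
  of the Lax solution of the Riemann problem (u_l, u_r); subcritical data exclude vacuum,
  so X exists. If X itself is subcritical or critical, it is the junction state. If
  lam1 X > 0, the 1-wave from u_l to X is a rarefaction whose fan contains the speed 0,
  and only its sonic point (lam1 = 0) is admissible on both sides; symmetrically if
  lam2 X < 0. Equal heights and discharges force u_1^b = u_2^b.\<close>

section \<open>Reflection symmetry\<close>

text \<open>Corresponds to x \<mapsto> -x: a 2-wave from a to b becomes a 1-wave from reflect b to
  reflect a with negated speeds, so statements about 2-waves follow from those about 1-waves.\<close>
definition reflect :: "state \<Rightarrow> state" where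
  "reflect u = (fst u, - snd u)"

definition rinv1 :: "real \<Rightarrow> state \<Rightarrow> real" where
  "rinv1 g u = vel u + 2 * celerity g u"

definition rinv2 :: "real \<Rightarrow> state \<Rightarrow> real" where
  "rinv2 g u = vel u - 2 * celerity g u"

lemma reflect_simps [simp]:
  "fst (reflect u) = fst u" "snd (reflect u) = - snd u" "reflect (reflect u) = u"
  "vel (reflect u) = - vel u" "celerity g (reflect u) = celerity g u"
  "lam1 g (reflect u) = - lam2 g u" "lam2 g (reflect u) = - lam1 g u"
  "rinv1 g (reflect u) = - rinv2 g u"
  by (simp_all add: reflect_def vel_def celerity_def lam1_def lam2_def rinv1_def rinv2_def)

lemma reflect_eq_iff [simp]: "reflect a = reflect b \<longleftrightarrow> a = b"
  by (metis reflect_simps(3))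

lemma subcritical_reflect [simp]: "subcritical g (reflect u) \<longleftrightarrow> subcritical g u"
  by (simp add: subcritical_def froude_def)

lemma RH_reflect: "RH g (reflect b) (reflect a) (- s) \<longleftrightarrow> RH g a b s"
  by (auto simp: RH_def flux_q_def algebra_simps)

lemma shock1_reflect: "shock1 g (reflect b) (reflect a) (- s) \<longleftrightarrow> shock2 g a b s"
  by (auto simp: shock1_def shock2_def RH_reflect)

lemma rare1_reflect: "rare1 g (reflect b) (reflect a) \<longleftrightarrow> rare2 g a b"
  by (auto simp: rare1_def rare2_def)

lemma image_uminus_eq_iff: "uminus ` A = (B :: real set) \<longleftrightarrow> A = uminus ` B"
  by (auto simp: image_iff)

lemma wave1_reflect: "wave1 g (reflect b) (reflect a) (uminus ` S) \<longleftrightarrow> wave2 g a b S"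
proof -
  have "uminus ` S = {s} \<longleftrightarrow> S = {- s}" for s
    by (simp add: image_uminus_eq_iff)
  then have "(\<exists>s. shock1 g (reflect b) (reflect a) s \<and> uminus ` S = {s})
      \<longleftrightarrow> (\<exists>s. shock2 g a b s \<and> S = {s})"
    by (metis shock1_reflect minus_minus)
  then show ?thesis
    by (auto simp: wave1_def wave2_def rare1_reflect image_uminus_eq_iff)
qed

lemma wave2_reflect: "wave2 g (reflect b) (reflect a) (uminus ` S) \<longleftrightarrow> wave1 g a b S"
  using wave1_reflect[of g "reflect a" "reflect b" "uminus ` S"] by (simp add: image_image)

lemma riemann_sol_reflect:
  "riemann_sol g ul ur um S1 S2 \<Longrightarrow>
     riemann_sol g (reflect ur) (reflect ul) (reflect um) (uminus ` S2) (uminus ` S1)"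
  by (simp add: riemann_sol_def wave1_reflect wave2_reflect)

lemma Nset_reflect: "reflect u \<in> Nset g (reflect ur) \<longleftrightarrow> u \<in> Pset g ur"
proof
  assume "reflect u \<in> Nset g (reflect ur)"
  then obtain um S1 S2
    where "riemann_sol g (reflect ur) (reflect u) um S1 S2" "\<forall>s \<in> S1 \<union> S2. s \<le> 0"
    by (auto simp: Nset_def)
  then show "u \<in> Pset g ur"
    using riemann_sol_reflect[of g "reflect ur" "reflect u" um S1 S2]
    unfolding Pset_def
    by (intro CollectI exI[of _ "reflect um"] exI[of _ "uminus ` S2"] exI[of _ "uminus ` S1"]) auto
next
  assume "u \<in> Pset g ur"
  then obtain um S1 S2 where "riemann_sol g u ur um S1 S2" "\<forall>s \<in> S1 \<union> S2. s \<ge> 0"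
    by (auto simp: Pset_def)
  then show "reflect u \<in> Nset g (reflect ur)"
    using riemann_sol_reflect[of g u ur um S1 S2] unfolding Nset_def
    by (intro CollectI exI[of _ "reflect um"] exI[of _ "uminus ` S2"] exI[of _ "uminus ` S1"]) auto
qed

lemma Pset_reflect: "reflect u \<in> Pset g (reflect ul) \<longleftrightarrow> u \<in> Nset g ul"
  using Nset_reflect[of "reflect u" g "reflect ul"] by simp

section \<open>Subcritical and sonic states\<close>

lemma celerity_pos: "g > 0 \<Longrightarrow> fst u > 0 \<Longrightarrow> celerity g u > 0"
  by (simp add: celerity_def)

lemma lam1_less_lam2: "g > 0 \<Longrightarrow> fst u > 0 \<Longrightarrow> lam1 g u < lam2 g u"
  using celerity_pos[of g u] by (simp add: lam1_def lam2_def)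

lemma state_eqI: "fst a = fst b \<Longrightarrow> vel a = vel b \<Longrightarrow> fst a > 0 \<Longrightarrow> a = b"
  by (cases a, cases b) (simp add: vel_def)

lemma subcriticalD:
  assumes "g > 0" "subcritical g u"
  shows "fst u > 0" "\<bar>vel u\<bar> < celerity g u" "lam1 g u < 0" "lam2 g u > 0"
    "rinv2 g u < 0" "rinv1 g u > 0"
proof -
  show h: "fst u > 0" using assms by (simp add: subcritical_def)
  have "froude g u = vel u / celerity g u"
    by (simp add: froude_def vel_def celerity_def)
  then show "\<bar>vel u\<bar> < celerity g u"
    using assms celerity_pos[OF assms(1) h] by (simp add: subcritical_def abs_divide divide_less_eq)
  then show "lam1 g u < 0" "lam2 g u > 0" "rinv2 g u < 0" "rinv1 g u > 0"
    by (auto simp: lam1_def lam2_def rinv1_def rinv2_def)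
qed

text \<open>On a 1-rarefaction v + 2c is constant; where it meets lam1 = 0 we have v = c,
  hence c = (v + 2c)/3.\<close>
definition sonic1 :: "real \<Rightarrow> state \<Rightarrow> state" where
  "sonic1 g u = (let c = rinv1 g u / 3 in (c\<^sup>2 / g, c ^ 3 / g))"

lemma sonic1:
  assumes "g > 0" "rinv1 g u > 0"
  shows "fst (sonic1 g u) > 0" "lam1 g (sonic1 g u) = 0" "rinv1 g (sonic1 g u) = rinv1 g u"
proof -
  define c where "c = rinv1 g u / 3"
  have c: "c > 0" using assms by (simp add: c_def)
  have s: "sonic1 g u = (c\<^sup>2 / g, c ^ 3 / g)" by (simp add: sonic1_def c_def Let_def)
  have "celerity g (sonic1 g u) = c" "vel (sonic1 g u) = c"
    using assms c by (simp_all add: s celerity_def vel_def power2_eq_square power3_eq_cube)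
  then show "fst (sonic1 g u) > 0" "lam1 g (sonic1 g u) = 0" "rinv1 g (sonic1 g u) = rinv1 g u"
    using assms c by (simp_all add: s lam1_def rinv1_def c_def)
qed

lemma sonic1_unique:
  assumes "g > 0" "fst v > 0" "lam1 g v = 0" "rinv1 g v = rinv1 g u"
  shows "v = sonic1 g u"
proof -
  define c where "c = celerity g v"
  have "vel v = c" and "rinv1 g u = 3 * c"
    using assms by (simp_all add: c_def lam1_def rinv1_def)
  moreover have "fst v = c\<^sup>2 / g" using assms by (simp add: c_def celerity_def)
  moreover have "snd v = fst v * vel v" using assms by (simp add: vel_def)
  ultimately show ?thesis
    by (cases v) (simp add: sonic1_def power2_eq_square power3_eq_cube)
qed

section \<open>Shocks\<close>

lemma RH_mass_flux:
  assumes "RH g a b s" "fst a > 0" "fst b > 0" "fst a \<noteq> fst b"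
  shows "snd b - s * fst b = snd a - s * fst a"
    and "(snd a - s * fst a)\<^sup>2 = g * fst a * fst b * (fst a + fst b) / 2"
proof -
  obtain ha qa hb qb where ab: "a = (ha, qa)" "b = (hb, qb)" by (cases a, cases b)
  define m where "m = qa - s * ha"
  have mass: "s * (hb - ha) = qb - qa"
    and mom: "s * (qb - qa) = qb\<^sup>2 / hb + g * hb\<^sup>2 / 2 - (qa\<^sup>2 / ha + g * ha\<^sup>2 / 2)"
    using assms(1) by (auto simp: RH_def flux_q_def ab)
  have qa: "qa = m + s * ha" and qb: "qb = m + s * hb"
    using mass by (simp_all add: m_def algebra_simps)
  have h: "ha > 0" "hb > 0" "ha \<noteq> hb" using assms ab by auto
  have "s * (s * (hb - ha)) * (ha * hb)
      = ((m + s * hb)\<^sup>2 / hb + g * hb\<^sup>2 / 2 - ((m + s * ha)\<^sup>2 / ha + g * ha\<^sup>2 / 2)) * (ha * hb)"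
    using mom mass qa qb by simp
  then have "(m\<^sup>2 - g * ha * hb * (ha + hb) / 2) * (ha - hb) * (4 * ha * hb) = 0"
    using h by (simp add: field_simps power2_eq_square)
  then have "m\<^sup>2 = g * ha * hb * (ha + hb) / 2" using h by simp
  then show "snd b - s * fst b = snd a - s * fst a"
    and "(snd a - s * fst a)\<^sup>2 = g * fst a * fst b * (fst a + fst b) / 2"
    using qb by (simp_all add: ab m_def)
qed

lemma RH_of_mass_flux:
  assumes "ha > 0" "hb > 0" "m\<^sup>2 = g * ha * hb * (ha + hb) / 2"
  shows "RH g (ha, m + s * ha) (hb, m + s * hb) s"
proof -
  have "m\<^sup>2 * (ha - hb) / (ha * hb) + g * (hb\<^sup>2 - ha\<^sup>2) / 2 = 0"
    using assms by (simp add: field_simps power2_eq_square)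
  moreover have "(m + s * hb)\<^sup>2 / hb + g * hb\<^sup>2 / 2 - ((m + s * ha)\<^sup>2 / ha + g * ha\<^sup>2 / 2)
      = s * s * (hb - ha) + (m\<^sup>2 * (ha - hb) / (ha * hb) + g * (hb\<^sup>2 - ha\<^sup>2) / 2)"
    using assms by (simp add: field_simps power2_eq_square)
  ultimately show ?thesis by (simp add: RH_def flux_q_def algebra_simps)
qed

text \<open>Both Lax inequalities of a 1-shock are equivalent to the height increasing across it.\<close>
lemma mass_flux_celerity:
  assumes "g > 0" "ha > 0" "hb > 0" "m \<ge> 0" "m\<^sup>2 = g * ha * hb * (ha + hb) / 2"
  shows "sqrt (g * ha) < m / ha \<longleftrightarrow> ha < hb"
    and "m / hb < sqrt (g * hb) \<longleftrightarrow> ha < hb"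
proof -
  have k1: "g * (hb + 2 * ha) / (2 * ha) > 0" and k2: "g * (2 * hb + ha) / (2 * hb) > 0"
    using assms by simp_all
  have "(m / ha)\<^sup>2 - g * ha = (hb - ha) * (g * (hb + 2 * ha) / (2 * ha))"
    using assms by (simp add: field_simps power2_eq_square)
  moreover have "sqrt (g * ha) < m / ha \<longleftrightarrow> g * ha < (m / ha)\<^sup>2"
    using real_sqrt_less_iff[of "g * ha" "(m / ha)\<^sup>2"] assms by simp
  ultimately show "sqrt (g * ha) < m / ha \<longleftrightarrow> ha < hb"
    using k1 by (smt (verit) zero_less_mult_iff)
  have "g * hb - (m / hb)\<^sup>2 = (hb - ha) * (g * (2 * hb + ha) / (2 * hb))"
    using assms by (simp add: field_simps power2_eq_square)
  moreover have "m / hb < sqrt (g * hb) \<longleftrightarrow> (m / hb)\<^sup>2 < g * hb"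
    using real_sqrt_less_iff[of "(m / hb)\<^sup>2" "g * hb"] assms by simp
  ultimately show "m / hb < sqrt (g * hb) \<longleftrightarrow> ha < hb"
    using k2 by (smt (verit) zero_less_mult_iff)
qed

definition shock_dv :: "real \<Rightarrow> real \<Rightarrow> real \<Rightarrow> real" where
  "shock_dv g a h = (h - a) * sqrt (g * h * a * (h + a) / 2) / (h * a)"

lemma shock1_iff:
  assumes g: "g > 0" and pos: "fst a > 0" "fst b > 0"
  shows "(\<exists>s. shock1 g a b s) \<longleftrightarrow> fst a < fst b \<and> vel b = vel a - shock_dv g (fst a) (fst b)"
proof -
  obtain ha qa hb qb where ab: "a = (ha, qa)" "b = (hb, qb)" by (cases a, cases b)
  have h: "ha > 0" "hb > 0" using pos ab by auto
  define M where "M = sqrt (g * hb * ha * (hb + ha) / 2)"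
  have M: "M \<ge> 0" "M\<^sup>2 = g * ha * hb * (ha + hb) / 2"
    using g h by (simp_all add: M_def ac_simps)
  have dv: "shock_dv g ha hb = M / ha - M / hb"
    using h by (simp add: shock_dv_def M_def field_simps)
  have vel_flux: "vel (h', m + s * h') = s + m / h'" if "h' > 0" for h' m s
    using that by (simp add: vel_def field_simps)
  show ?thesis
  proof
    assume "\<exists>s. shock1 g a b s"
    then obtain s where RH: "RH g a b s" and lax: "lam1 g b < s" "s < lam1 g a"
      by (auto simp: shock1_def)
    have "ha \<noteq> hb"
    proof
      assume "ha = hb"
      then have "a = b" using RH by (simp add: RH_def ab)
      then show False using lax by simp
    qed
    then have flux: "qb - s * hb = qa - s * ha"
      and m2: "(qa - s * ha)\<^sup>2 = g * ha * hb * (ha + hb) / 2"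
      using RH_mass_flux[OF RH] pos ab by auto
    define m where "m = qa - s * ha"
    have a_m: "a = (ha, m + s * ha)" and b_m: "b = (hb, m + s * hb)"
      using ab flux by (simp_all add: m_def algebra_simps)
    have lax_a: "sqrt (g * ha) < m / ha"
      using lax(2) h by (simp add: a_m vel_flux lam1_def celerity_def)
    have "0 < m / ha"
      using le_less_trans[OF real_sqrt_ge_zero lax_a] g h by simp
    then have "m \<ge> 0" using h by (auto simp: zero_less_divide_iff)
    have "ha < hb"
      using mass_flux_celerity(1)[OF g h \<open>m \<ge> 0\<close> m2[folded m_def]] lax_a by simp
    have "m\<^sup>2 = M\<^sup>2" using m2 M by (simp add: m_def)
    then have "m = M" using \<open>m \<ge> 0\<close> M(1) by (rule power2_eq_imp_eq)
    with \<open>ha < hb\<close> show "fst a < fst b \<and> vel b = vel a - shock_dv g (fst a) (fst b)"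
      using h by (simp add: a_m b_m vel_flux dv)
  next
    assume rhs: "fst a < fst b \<and> vel b = vel a - shock_dv g (fst a) (fst b)"
    define s where "s = qa / ha - M / ha"
    have "qb / hb = qa / ha - (M / ha - M / hb)"
      using rhs ab by (simp add: vel_def dv)
    then have a_M: "a = (ha, M + s * ha)" and b_M: "b = (hb, M + s * hb)"
      using h ab by (simp_all add: s_def field_simps)
    have "RH g a b s"
      unfolding a_M b_M by (rule RH_of_mass_flux) (use h M in auto)
    moreover have "sqrt (g * ha) < M / ha" "M / hb < sqrt (g * hb)"
      using mass_flux_celerity[OF g h M] rhs ab by auto
    moreover have "0 < M / hb + sqrt (g * hb)"
      using M h g by (simp add: add_nonneg_pos)
    ultimately show "\<exists>s. shock1 g a b s"
      using h unfolding shock1_def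
      by (intro exI[of _ s]) (simp add: a_M b_M vel_flux lam1_def lam2_def celerity_def)
  qed
qed

lemma shock_dv_self [simp]: "shock_dv g a a = 0"
  by (simp add: shock_dv_def)

lemma shock_dv_nonneg: "g \<ge> 0 \<Longrightarrow> a > 0 \<Longrightarrow> a \<le> h \<Longrightarrow> shock_dv g a h \<ge> 0"
  by (simp add: shock_dv_def)

lemma shock_dv_sq:
  "g \<ge> 0 \<Longrightarrow> a > 0 \<Longrightarrow> h > 0 \<Longrightarrow> (shock_dv g a h)\<^sup>2 = g / (2 * a) * ((h - a)\<^sup>2 * (h + a) / h)"
  by (simp add: shock_dv_def power_mult_distrib power_divide field_simps power2_eq_square)

lemma shock_dv_strict_mono:
  assumes "g > 0" "a > 0" "a \<le> x" "x < y"
  shows "shock_dv g a x < shock_dv g a y"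
proof -
  have "g / (2 * a) * ((x - a)\<^sup>2 * (x + a) / x) < g / (2 * a) * ((y - a)\<^sup>2 * (y + a) / y)"
  proof (rule mult_strict_left_mono)
    have "(x - a)\<^sup>2 * (x + a) / x = (x\<^sup>2 - a\<^sup>2) * (1 - a / x)"
      and "(y - a)\<^sup>2 * (y + a) / y = (y\<^sup>2 - a\<^sup>2) * (1 - a / y)"
      using assms by (simp_all add: field_simps power2_eq_square)
    moreover have "(x\<^sup>2 - a\<^sup>2) * (1 - a / x) \<le> (x\<^sup>2 - a\<^sup>2) * (1 - a / y)"
      using assms by (intro mult_left_mono) (auto simp: divide_left_mono power_mono)
    moreover have "\<dots> < (y\<^sup>2 - a\<^sup>2) * (1 - a / y)"
      using assms by (intro mult_strict_right_mono) (auto simp: power_strict_mono)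
    ultimately show "(x - a)\<^sup>2 * (x + a) / x < (y - a)\<^sup>2 * (y + a) / y" by simp
  qed (use assms in simp)
  then have "(shock_dv g a x)\<^sup>2 < (shock_dv g a y)\<^sup>2"
    using assms by (simp add: shock_dv_sq)
  then show ?thesis
    using shock_dv_nonneg[of g a y] assms by (auto intro: power_less_imp_less_base)
qed

lemma shock_dv_lower_bound:
  assumes "g > 0" "a > 0" "a \<le> h"
  shows "(h - a) * sqrt (g / (2 * a)) \<le> shock_dv g a h"
proof (rule power2_le_imp_le)
  have "(h - a)\<^sup>2 * 1 \<le> (h - a)\<^sup>2 * ((h + a) / h)"
    using assms by (intro mult_left_mono) auto
  then have "g / (2 * a) * (h - a)\<^sup>2 \<le> g / (2 * a) * ((h - a)\<^sup>2 * (h + a) / h)"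
    using assms by (intro mult_left_mono) auto
  then show "((h - a) * sqrt (g / (2 * a)))\<^sup>2 \<le> (shock_dv g a h)\<^sup>2"
    using assms by (simp add: shock_dv_sq power_mult_distrib ac_simps)
  show "0 \<le> shock_dv g a h" using assms by (simp add: shock_dv_nonneg)
qed

section \<open>The 1-wave curve\<close>

lemma rare1_iff:
  assumes "g > 0" "fst a > 0" "fst b > 0"
  shows "rare1 g a b \<longleftrightarrow> fst b < fst a \<and> vel b = rinv1 g a - 2 * sqrt (g * fst b)"
proof -
  have "rare1 g a b \<longleftrightarrow> rinv1 g a = rinv1 g b \<and> celerity g b < celerity g a"
    by (auto simp: rare1_def rinv1_def lam1_def)
  also have "\<dots> \<longleftrightarrow> fst b < fst a \<and> vel b = rinv1 g a - 2 * sqrt (g * fst b)"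
    using assms by (auto simp: rinv1_def celerity_def)
  finally show ?thesis .
qed

text \<open>Velocity at height h on the 1-wave curve issuing from u: the rarefaction branch
  for h \<le> fst u, the shock branch for h \<ge> fst u (each correction term vanishes on the
  other branch).\<close>
definition wave1_curve :: "real \<Rightarrow> state \<Rightarrow> real \<Rightarrow> real" where
  "wave1_curve g u h =
     rinv1 g u - 2 * sqrt (g * min h (fst u)) - shock_dv g (fst u) (max h (fst u))"

lemma wave1_curve_le: "h \<le> fst u \<Longrightarrow> wave1_curve g u h = rinv1 g u - 2 * sqrt (g * h)"
  by (simp add: wave1_curve_def)

lemma wave1_curve_ge: "fst u \<le> h \<Longrightarrow> wave1_curve g u h = vel u - shock_dv g (fst u) h"
  by (simp add: wave1_curve_def rinv1_def celerity_def)

lemma wave1_curve_iff: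
  assumes g: "g > 0" and pos: "fst u > 0" "fst v > 0"
  shows "(\<exists>S. wave1 g u v S) \<longleftrightarrow> vel v = wave1_curve g u (fst v)"
proof -
  have "(\<exists>S. wave1 g u v S) \<longleftrightarrow> v = u \<or> (\<exists>s. shock1 g u v s) \<or> rare1 g u v"
    by (auto simp: wave1_def)
  also have "\<dots> \<longleftrightarrow> vel v = wave1_curve g u (fst v)"
    using pos state_eqI[of v u] shock1_iff[OF g pos] rare1_iff[OF g pos]
    by (cases "fst v" "fst u" rule: linorder_cases)
      (auto simp: wave1_curve_le wave1_curve_ge rinv1_def celerity_def)
  finally show ?thesis .
qed

lemma wave1_curve_strict_antimono:
  assumes "g > 0" "fst u > 0" "0 \<le> x" "x < y"
  shows "wave1_curve g u y < wave1_curve g u x"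
proof (cases "x < fst u")
  case True
  have "sqrt (g * min x (fst u)) < sqrt (g * min y (fst u))"
    using assms True by (simp add: min_def)
  moreover have "shock_dv g (fst u) (max x (fst u)) \<le> shock_dv g (fst u) (max y (fst u))"
    using assms shock_dv_strict_mono[of g "fst u" "max x (fst u)" "max y (fst u)"]
    by (cases "y \<le> fst u") (auto simp: max_def)
  ultimately show ?thesis unfolding wave1_curve_def by linarith
next
  case False
  then show ?thesis
    using assms shock_dv_strict_mono[of g "fst u" x y] by (simp add: wave1_curve_ge)
qed

lemma continuous_on_wave1_curve: "fst u > 0 \<Longrightarrow> continuous_on S (wave1_curve g u)"
  unfolding wave1_curve_def shock_dv_def
  by (intro continuous_intros) (auto simp: max_def)

lemma wave1_curve_unbounded_below:
  assumes "g > 0" "fst u > 0"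
  obtains h where "fst u \<le> h" "wave1_curve g u h \<le> M"
proof
  define k where "k = sqrt (g / (2 * fst u))"
  have k: "k > 0" using assms by (simp add: k_def)
  define h where "h = fst u + \<bar>vel u - M\<bar> / k"
  show "fst u \<le> h" using k by (simp add: h_def)
  have "\<bar>vel u - M\<bar> = (h - fst u) * k" using k by (simp add: h_def)
  also have "\<dots> \<le> shock_dv g (fst u) h"
    using shock_dv_lower_bound[of g "fst u" h] assms \<open>fst u \<le> h\<close> by (simp add: k_def)
  finally show "wave1_curve g u h \<le> M"
    using \<open>fst u \<le> h\<close> by (simp add: wave1_curve_ge)
qed

section \<open>The Riemann problem\<close>

lemma wave2_curve_iff:
  assumes "g > 0" "fst u > 0" "fst v > 0"
  shows "(\<exists>S. wave2 g u v S) \<longleftrightarrow> vel u = - wave1_curve g (reflect v) (fst u)"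
proof -
  have "(\<exists>S. wave2 g u v S) \<longleftrightarrow> (\<exists>S. wave1 g (reflect v) (reflect u) S)"
    by (metis wave1_reflect wave2_reflect reflect_simps(3))
  also have "\<dots> \<longleftrightarrow> vel u = - wave1_curve g (reflect v) (fst u)"
    using wave1_curve_iff[of g "reflect v" "reflect u"] assms by auto
  finally show ?thesis .
qed

lemma riemann_sol_iff_curves:
  assumes "g > 0" "fst ul > 0" "fst ur > 0" "fst X > 0"
  shows "(\<exists>S1 S2. riemann_sol g ul ur X S1 S2)
    \<longleftrightarrow> vel X = wave1_curve g ul (fst X) \<and> vel X = - wave1_curve g (reflect ur) (fst X)"
  using assms wave1_curve_iff[of g ul X] wave2_curve_iff[of g X ur]
  by (auto simp: riemann_sol_def)

lemma riemann_sol_unique: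
  assumes g: "g > 0" and "riemann_sol g ul ur X S1 S2" "riemann_sol g ul ur Y T1 T2"
  shows "X = Y"
proof -
  have pos: "fst ul > 0" "fst ur > 0" "fst X > 0" "fst Y > 0"
    using assms by (auto simp: riemann_sol_def)
  define F where "F h = wave1_curve g ul h + wave1_curve g (reflect ur) h" for h
  have F: "F (fst X) = 0" "F (fst Y) = 0"
    and vel: "vel X = wave1_curve g ul (fst X)" "vel Y = wave1_curve g ul (fst Y)"
    using assms riemann_sol_iff_curves[OF g pos(1,2)] pos by (fastforce simp: F_def)+
  have "F y < F x" if "0 \<le> x" "x < y" for x y
    using wave1_curve_strict_antimono[OF g _ that, of ul]
      wave1_curve_strict_antimono[OF g _ that, of "reflect ur"] pos
    by (simp add: F_def)
  then have "fst X = fst Y"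
    using F pos by (metis less_le not_less_iff_gr_or_eq)
  then show ?thesis
    using vel pos by (intro state_eqI) auto
qed

text \<open>The hypothesis on the Riemann invariants excludes the formation of vacuum.\<close>
lemma riemann_sol_exists:
  assumes g: "g > 0" and pos: "fst ul > 0" "fst ur > 0" and "rinv2 g ur < rinv1 g ul"
  obtains X S1 S2 where "riemann_sol g ul ur X S1 S2"
proof -
  define F where "F h = wave1_curve g ul h + wave1_curve g (reflect ur) h" for h
  have "F 0 > 0"
    using assms by (simp add: F_def wave1_curve_le less_imp_le)
  obtain b0 where b0: "fst ul \<le> b0" "wave1_curve g ul b0 \<le> vel ur"
    using wave1_curve_unbounded_below[OF g pos(1)] by blast
  define b where "b = max b0 (fst ur)"
  have antimono: "wave1_curve g u y \<le> wave1_curve g u x" if "fst u > 0" "0 \<le> x" "x \<le> y" for u x y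
    using wave1_curve_strict_antimono[OF g that(1,2), of y] that(3) by (cases "x = y") auto
  have "wave1_curve g ul b \<le> vel ur"
    using antimono[of ul b0 b] b0 pos by (simp add: b_def)
  moreover have "wave1_curve g (reflect ur) b \<le> - vel ur"
    using antimono[of "reflect ur" "fst ur" b] pos by (simp add: b_def wave1_curve_ge)
  ultimately have "F b \<le> 0" by (simp add: F_def)
  moreover have "continuous_on {0..b} F"
    unfolding F_def using pos by (intro continuous_intros continuous_on_wave1_curve) auto
  ultimately obtain h where h: "0 \<le> h" "F h = 0"
    using IVT2'[of F b 0 0] \<open>F 0 > 0\<close> pos b0 by (force simp: b_def)
  with \<open>F 0 > 0\<close> have "h > 0" by (cases "h = 0") auto
  define X where "X = (h, h * wave1_curve g ul h)"
  have "vel X = wave1_curve g ul (fst X) \<and> vel X = - wave1_curve g (reflect ur) (fst X)"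
    using \<open>h > 0\<close> h by (simp add: X_def vel_def F_def)
  then have "\<exists>S1 S2. riemann_sol g ul ur X S1 S2"
    using riemann_sol_iff_curves[OF g pos, of X] \<open>h > 0\<close> by (simp add: X_def)
  then show ?thesis using that by blast
qed

section \<open>Boundary states at the junction\<close>

lemma rare1_trans: "rare1 g a b \<Longrightarrow> rare1 g b c \<Longrightarrow> rare1 g a c"
  by (auto simp: rare1_def)

lemma rare1_wave1: "rare1 g a b \<Longrightarrow> wave1 g a b {lam1 g a..lam1 g b}"
  by (simp add: wave1_def)

lemma wave1_rare1: "wave1 g a b S \<Longrightarrow> lam1 g a < lam1 g b \<Longrightarrow> rare1 g a b \<and> S = {lam1 g a..lam1 g b}"
  by (auto simp: wave1_def shock1_def)

lemma wave1_speed_le: "wave1 g a b S \<Longrightarrow> s \<in> S \<Longrightarrow> s \<le> max (lam1 g a) (lam1 g b)"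
  by (auto simp: wave1_def shock1_def)

lemma wave2_speed_ge: "wave2 g a b S \<Longrightarrow> s \<in> S \<Longrightarrow> min (lam2 g a) (lam2 g b) \<le> s"
  by (auto simp: wave2_def shock2_def)

lemma wave1_nonpos_speeds:
  "wave1 g a b S \<Longrightarrow> \<forall>s\<in>S. s \<le> 0 \<Longrightarrow> lam1 g a < 0 \<Longrightarrow> lam1 g b \<le> 0"
  by (auto simp: wave1_def shock1_def)

lemma wave1_nonneg_speeds:
  assumes "wave1 g a b S" "\<forall>s\<in>S. 0 \<le> s" "lam1 g a \<le> 0"
  shows "b = a \<or> (rare1 g a b \<and> lam1 g a = 0)"
  using assms unfolding wave1_def shock1_def rare1_def
  by (elim disjE exE conjE) (simp_all, force)

lemma wave2_nonpos_speeds: "wave2 g a b S \<Longrightarrow> \<forall>s\<in>S. s \<le> 0 \<Longrightarrow> b = a \<or> lam2 g b \<le> 0"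
  by (auto simp: wave2_def shock2_def rare2_def)

lemma wave2_nonneg_speeds: "wave2 g a b S \<Longrightarrow> \<forall>s\<in>S. 0 \<le> s \<Longrightarrow> b = a \<or> 0 \<le> lam2 g a"
  by (auto simp: wave2_def shock2_def rare2_def)

lemma Nset_pos: "u \<in> Nset g ul \<Longrightarrow> fst u > 0"
  by (auto simp: Nset_def riemann_sol_def)

lemma Nset_cases:
  assumes "u \<in> Nset g ul"
  shows "(\<exists>S. wave1 g ul u S \<and> (\<forall>s\<in>S. s \<le> 0)) \<or> lam2 g u \<le> 0"
proof -
  obtain um S1 S2 where "riemann_sol g ul u um S1 S2" "\<forall>s \<in> S1 \<union> S2. s \<le> 0"
    using assms by (auto simp: Nset_def)
  then show ?thesis
    using wave2_nonpos_speeds[of g um u S2] by (auto simp: riemann_sol_def)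
qed

lemma boundary_state_of_wave1:
  assumes g: "g > 0" and sub: "subcritical g ul" "subcritical g ur"
    and X: "riemann_sol g ul ur X S1 S2"
    and w: "wave1 g ul u S" "\<forall>s\<in>S. s \<le> 0" and P: "u \<in> Pset g ur"
  shows "(u = X \<and> lam1 g X \<le> 0 \<and> 0 \<le> lam2 g X) \<or> (u = sonic1 g ul \<and> 0 < lam1 g X)"
proof -
  note l = subcriticalD[OF g sub(1)] and r = subcriticalD[OF g sub(2)]
  obtain um T1 T2 where sol: "riemann_sol g u ur um T1 T2" and T: "\<forall>s \<in> T1 \<union> T2. 0 \<le> s"
    using P by (auto simp: Pset_def)
  have pos: "fst u > 0" "fst um > 0" and w1: "wave1 g u um T1" and w2: "wave2 g um ur T2"
    using sol by (auto simp: riemann_sol_def)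
  have "lam1 g u \<le> 0" using wave1_nonpos_speeds[OF w] l by simp
  then consider "um = u" | "rare1 g u um" "lam1 g u = 0"
    using wave1_nonneg_speeds[OF w1] T by auto
  then show ?thesis
  proof cases
    case 1
    then have "riemann_sol g ul ur u S T2" using pos l r w w2 by (simp add: riemann_sol_def)
    then have "u = X" using riemann_sol_unique[OF g _ X] by blast
    moreover have "0 \<le> lam2 g u" using wave2_nonneg_speeds[OF w2] 1 T r by auto
    ultimately show ?thesis using \<open>lam1 g u \<le> 0\<close> by simp
  next
    case 2
    have "rare1 g ul u" using wave1_rare1[OF w(1)] l 2 by simp
    then have "riemann_sol g ul ur um {lam1 g ul..lam1 g um} T2"
      using rare1_trans[OF _ 2(1)] pos l r w2 by (simp add: riemann_sol_def rare1_wave1)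
    then have "um = X" using riemann_sol_unique[OF g _ X] by blast
    moreover have "u = sonic1 g ul"
      using sonic1_unique[OF g pos(1) 2(2)] \<open>rare1 g ul u\<close> by (simp add: rare1_def rinv1_def)
    ultimately show ?thesis using 2 by (simp add: rare1_def)
  qed
qed

lemma boundary_state_cases:
  assumes g: "g > 0" and sub: "subcritical g ul" "subcritical g ur"
    and X: "riemann_sol g ul ur X S1 S2" and u: "u \<in> Nset g ul" "u \<in> Pset g ur"
  shows "(u = X \<and> lam1 g X \<le> 0 \<and> 0 \<le> lam2 g X) \<or> (u = sonic1 g ul \<and> 0 < lam1 g X)
    \<or> (u = reflect (sonic1 g (reflect ur)) \<and> lam2 g X < 0)"
proof -
  consider (from_left) S where "wave1 g ul u S" "\<forall>s\<in>S. s \<le> 0"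
    | (from_right) S where "wave1 g (reflect ur) (reflect u) S" "\<forall>s\<in>S. s \<le> 0"
    | (sonic) "lam2 g u \<le> 0" "0 \<le> lam1 g u"
    using Nset_cases[OF u(1)] Nset_cases[of "reflect u" g "reflect ur"] u(2)
    by (auto simp: Nset_reflect)
  then show ?thesis
  proof cases
    case from_left
    then show ?thesis using boundary_state_of_wave1[OF g sub X _ _ u(2)] by blast
  next
    case from_right
    have "(reflect u = reflect X \<and> lam1 g (reflect X) \<le> 0 \<and> 0 \<le> lam2 g (reflect X))
        \<or> (reflect u = sonic1 g (reflect ur) \<and> 0 < lam1 g (reflect X))"
      using boundary_state_of_wave1[OF _ _ _ riemann_sol_reflect[OF X] from_right] g sub u(1)
      by (simp add: Pset_reflect)
    then show ?thesis by (auto dest: arg_cong[where f = reflect])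
  next
    case sonic
    then show ?thesis using lam1_less_lam2[OF g Nset_pos[OF u(1)]] by simp
  qed
qed

lemma middle_state_is_boundary_state:
  assumes g: "g > 0" and sub: "subcritical g ul" "subcritical g ur"
    and X: "riemann_sol g ul ur X S1 S2" and lam: "lam1 g X \<le> 0" "0 \<le> lam2 g X"
  shows "X \<in> Nset g ul" "X \<in> Pset g ur"
proof -
  have w: "wave1 g ul X S1" "wave2 g X ur S2"
    using X by (simp_all add: riemann_sol_def)
  have "riemann_sol g ul X X S1 {}" "riemann_sol g X ur X {} S2"
    using X by (auto simp: riemann_sol_def wave1_def wave2_def)
  moreover have "\<forall>s\<in>S1. s \<le> 0" "\<forall>s\<in>S2. 0 \<le> s"
    using wave1_speed_le[OF w(1)] wave2_speed_ge[OF w(2)] lam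
      subcriticalD[OF g sub(1)] subcriticalD[OF g sub(2)]
    by fastforce+
  ultimately show "X \<in> Nset g ul" "X \<in> Pset g ur"
    unfolding Nset_def Pset_def by blast+
qed

lemma sonic1_is_boundary_state:
  assumes g: "g > 0" and sub: "subcritical g ul" "subcritical g ur"
    and X: "riemann_sol g ul ur X S1 S2" and lam: "0 < lam1 g X"
  shows "sonic1 g ul \<in> Nset g ul" "sonic1 g ul \<in> Pset g ur"
proof -
  note l = subcriticalD[OF g sub(1)] and r = subcriticalD[OF g sub(2)]
  define u where "u = sonic1 g ul"
  note u = sonic1[OF g l(6), folded u_def]
  have w: "wave1 g ul X S1" "wave2 g X ur S2" and X0: "fst X > 0"
    using X by (simp_all add: riemann_sol_def)
  have "rare1 g ul X" using wave1_rare1[OF w(1)] l lam by simp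
  then have "rare1 g ul u" "rare1 g u X"
    using u l lam by (simp_all add: rare1_def rinv1_def)
  then have "riemann_sol g ul u u {lam1 g ul..0} {}" "riemann_sol g u ur X {0..lam1 g X} S2"
    using w X0 u l r by (auto simp: riemann_sol_def wave2_def dest: rare1_wave1)
  moreover have "\<forall>s\<in>S2. 0 \<le> s"
    using wave2_speed_ge[OF w(2)] lam lam1_less_lam2[OF g X0] r by fastforce
  ultimately show "u \<in> Nset g ul" "u \<in> Pset g ur"
    unfolding Nset_def Pset_def by fastforce+
qed

lemma boundary_state_ex1:
  assumes g: "g > 0" and sub: "subcritical g ul" "subcritical g ur"
  shows "\<exists>!u. u \<in> Nset g ul \<and> u \<in> Pset g ur"
proof -
  note l = subcriticalD[OF g sub(1)] and r = subcriticalD[OF g sub(2)]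
  have "rinv2 g ur < rinv1 g ul" using l r by linarith
  then obtain X S1 S2 where X: "riemann_sol g ul ur X S1 S2"
    using riemann_sol_exists[OF g l(1) r(1)] by blast
  have "lam1 g X < lam2 g X" using X lam1_less_lam2[OF g] by (simp add: riemann_sol_def)
  define v where "v = reflect (sonic1 g (reflect ur))"
  define b where "b = (if 0 < lam1 g X then sonic1 g ul else if lam2 g X < 0 then v else X)"
  have "b \<in> Nset g ul \<and> b \<in> Pset g ur"
  proof -
    have "v \<in> Nset g ul \<and> v \<in> Pset g ur" if "lam2 g X < 0"
      using sonic1_is_boundary_state[OF g _ _ riemann_sol_reflect[OF X]] sub that
        Pset_reflect[of v g ul] Nset_reflect[of v g ur]
      by (simp add: v_def)
    then show ?thesis
      using sonic1_is_boundary_state[OF g sub X] middle_state_is_boundary_state[OF g sub X]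
      by (simp add: b_def)
  qed
  moreover have "u = b" if "u \<in> Nset g ul" "u \<in> Pset g ur" for u
    using boundary_state_cases[OF g sub X that] \<open>lam1 g X < lam2 g X\<close>
    by (auto simp: b_def v_def)
  ultimately show ?thesis by blast
qed

theorem mainTheorem1:
  fixes g :: real and ul ur :: state
  assumes "g > 0"
    and "subcritical g ul" and "subcritical g ur"
  shows "\<exists>!(u1b, u2b). fst u1b > 0 \<and> fst u2b > 0
            \<and> u1b \<in> Nset g ul \<and> u2b \<in> Pset g ur
            \<and> snd u1b = snd u2b \<and> fst u1b = fst u2b"
proof -
  obtain b where b: "b \<in> Nset g ul" "b \<in> Pset g ur"
    and unique: "\<And>u. u \<in> Nset g ul \<Longrightarrow> u \<in> Pset g ur \<Longrightarrow> u = b"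
    using boundary_state_ex1[OF assms] by blast
  show ?thesis
  proof (rule ex1I[of _ "(b, b)"])
    fix p :: "state \<times> state"
    assume "case p of (u1b, u2b) \<Rightarrow> fst u1b > 0 \<and> fst u2b > 0
      \<and> u1b \<in> Nset g ul \<and> u2b \<in> Pset g ur \<and> snd u1b = snd u2b \<and> fst u1b = fst u2b"
    then show "p = (b, b)"
      using unique by (cases p) (simp add: prod_eq_iff)
  qed (use b Nset_pos in simp)
qed

end
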